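(* Let $R$ be a commutative ring with $\mathbb{Q}\subseteq R$, $\mathcal{A}$ a commutative unital $R$-algebra, and $\mathcal{E}$ a finitely generated projective $\mathcal{A}$-module with a symmetric, strongly nondegenerate, full $\mathcal{A}$-bilinear form $\langle\cdot,\cdot\rangle$. Let $\hat{\mathcal{C}}^\bullet(\mathcal{E})$ be the $\wedge$-subalgebra of $\mathcal{C}^\bullet(\mathcal{E})$ generated by $\mathcal{A}$, $\mathcal{E}$ and $\mathcal{C}^2(\mathcal{E})$, and let $\hat{\mathcal{C}}^3(\mathcal{E})=\hat{\mathcal{C}}^\bullet(\mathcal{E})\cap\mathcal{C}^3(\mathcal{E})$. Then $\hat{\mathcal{C}}^3(\mathcal{E})=\mathcal{C}^3(\mathcal{E})$.
   Context: Strongly nondegenerate: $\mathcal{E}\to\operatorname{Hom}_{\mathcal{A}}(\mathcal{E},\mathcal{A})$ is an isomorphism. Full: every $a\in\mathcal{A}$ is a finite sum $\sum_i\langle x_i,y_i\rangle$. $\operatorname{Der}(\mathcal{A})$: $R$-linear derivations of $\mathcal{A}$. Set $\mathcal{C}^0(\mathcal{E})=\mathcal{A}$ and $\mathcal{C}^1(\mathcal{E})=\mathcal{E}$. For $r\ge2$, $\mathcal{C}^r(\mathcal{E})$ is the set of $\mathsf{C}\in\operatorname{Hom}_R(\mathcal{E}^{\otimes_R(r-1)},\mathcal{E})$ admitting an $R$-multilinear $\sigma_{\mathsf{C}}:\mathcal{E}^{\otimes(r-2)}\to\operatorname{Der}(\mathcal{A})$ with two properties: (1) $\sigma_{\mathsf{C}}(x_1,\dots,x_{r-2})\langle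 u,w\rangle=\langle\mathsf{C}(x_1,\dots,x_{r-2},u),w\rangle+\langle u,\mathsf{C}(x_1,\dots,x_{r-2},w)\rangle$; (2) for $r\ge3$ and $1\le i\le r-2$, $\langle\mathsf{C}(\dots,x_i,x_{i+1},\dots)+\mathsf{C}(\dots,x_{i+1},x_i,\dots),u\rangle=\sigma_{\mathsf{C}}(x_1,\dots,\widehat{x_i},\widehat{x_{i+1}},\dots,x_{r-1},u)\langle x_i,x_{i+1}\rangle$. For $\mathsf{C}\in\mathcal{C}^r$ with $r\ge2$, $i_x\mathsf{C}$ inserts $x\in\mathcal{E}$ in the first argument; for $r=2$, $i_x\mathsf{C}=\mathsf{C}(x)\in\mathcal{E}$. The product $\wedge$ on $\mathcal{C}^\bullet(\mathcal{E})=\bigoplus_r\mathcal{C}^r(\mathcal{E})$ is the unique $R$-bilinear, degree-$0$ product with $a\wedge b=ab$ and $a\wedge x=ax=x\wedge a$ for $a,b\in\mathcal{A}$, $x\in\mathcal{E}$, satisfying $i_x(\mathsf{C}_1\wedge\mathsf{C}_2)=(-1)^s(i_x\mathsf{C}_1)\wedge\mathsf{C}_2+\mathsf{C}_1\wedge(i_x\mathsf{C}_2)$ for $\mathsf{C}_1\in\mathcal{C}^r$, $\mathsf{C}_2\in\mathcal{C}^s$. Here, for degree-$1$ elements $y\in\mathcal{E}$, one sets $i_xy=\langle y,x\rangle$, and $i_x$ of an element of $\mathcal{A}$ is $0$. This product is associative and graded commutative. *)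

theory Defs
  imports Complex_Main
begin

text \<open>R is a type 'r, A a type 'a; the R-algebra structure of A is a unital ring
  homomorphism phi : R -> A.  E is a type 'e with an A-module structure sc.\<close>

definition unital_ring_hom :: "('r::comm_ring_1 \<Rightarrow> 'a::comm_ring_1) \<Rightarrow> bool" where
  "unital_ring_hom phi \<longleftrightarrow> phi 1 = 1 \<and> (\<forall>x y. phi (x + y) = phi x + phi y)
     \<and> (\<forall>x y. phi (x * y) = phi x * phi y)"

text \<open>Q is contained in R: every positive integer is invertible in R.\<close>
definition contains_rationals :: "'r::comm_ring_1 itself \<Rightarrow> bool" where
  "contains_rationals _ \<longleftrightarrow> (\<forall>n::nat. 0 < n \<longrightarrow> (\<exists>c::'r. of_nat n * c = 1))"

text \<open>Finitely generated projective: a direct summand of a free module A^n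
  (A^n realised as functions nat => A vanishing from n on).\<close>
definition fg_projective :: "('a::comm_ring_1 \<Rightarrow> 'e::ab_group_add \<Rightarrow> 'e) \<Rightarrow> bool" where
  "fg_projective sc \<longleftrightarrow> (\<exists>(n::nat) (i::'e \<Rightarrow> nat \<Rightarrow> 'a) (p::(nat \<Rightarrow> 'a) \<Rightarrow> 'e).
      (\<forall>x k. n \<le> k \<longrightarrow> i x k = 0)
    \<and> (\<forall>x y. i (x + y) = (\<lambda>k. i x k + i y k))
    \<and> (\<forall>a x. i (sc a x) = (\<lambda>k. a * i x k))
    \<and> (\<forall>f g. p (\<lambda>k. f k + g k) = p f + p g)
    \<and> (\<forall>a f. p (\<lambda>k. a * f k) = sc a (p f))
    \<and> (\<forall>x. p (i x) = x))"

definition bilinear_form :: "('a::comm_ring_1 \<Rightarrow> 'e::ab_group_add \<Rightarrow> 'e) \<Rightarrow> ('e \<Rightarrow> 'e \<Rightarrow> 'a) \<Rightarrow> bool" where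
  "bilinear_form sc B \<longleftrightarrow>
     (\<forall>x y z. B (x + y) z = B x z + B y z) \<and> (\<forall>a x z. B (sc a x) z = a * B x z)
   \<and> (\<forall>x y z. B z (x + y) = B z x + B z y) \<and> (\<forall>a x z. B z (sc a x) = a * B z x)"

definition symmetric_form :: "('e \<Rightarrow> 'e \<Rightarrow> 'a) \<Rightarrow> bool" where
  "symmetric_form B \<longleftrightarrow> (\<forall>x y. B x y = B y x)"

definition strongly_nondegenerate ::
  "('a::comm_ring_1 \<Rightarrow> 'e::ab_group_add \<Rightarrow> 'e) \<Rightarrow> ('e \<Rightarrow> 'e \<Rightarrow> 'a) \<Rightarrow> bool" where
  "strongly_nondegenerate sc B \<longleftrightarrow> bij_betw B UNIV {f. module_hom sc (*) f}"

definition full_form :: "('e \<Rightarrow> 'e \<Rightarrow> 'a::comm_ring_1) \<Rightarrow> bool" where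
  "full_form B \<longleftrightarrow> (\<forall>a. \<exists>(n::nat) x y. a = (\<Sum>i<n. B (x i) (y i)))"

definition is_derivation :: "('r \<Rightarrow> 'a::comm_ring_1) \<Rightarrow> ('a \<Rightarrow> 'a) \<Rightarrow> bool" where
  "is_derivation phi D \<longleftrightarrow> (\<forall>a b. D (a + b) = D a + D b) \<and> (\<forall>c a. D (phi c * a) = phi c * D a)
     \<and> (\<forall>a b. D (a * b) = a * D b + b * D a)"

text \<open>R-multilinear maps of n arguments from E (arguments given as a list of length n)
  into a target with addition addT and R-scaling scT.\<close>
definition multilinear_R ::
  "('r \<Rightarrow> 'a::comm_ring_1) \<Rightarrow> ('a \<Rightarrow> 'e::ab_group_add \<Rightarrow> 'e) \<Rightarrow> nat \<Rightarrow>
   ('b \<Rightarrow> 'b \<Rightarrow> 'b) \<Rightarrow> ('r \<Rightarrow> 'b \<Rightarrow> 'b) \<Rightarrow> ('e list \<Rightarrow> 'b) \<Rightarrow> bool" where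
  "multilinear_R phi sc n addT scT f \<longleftrightarrow>
     (\<forall>xs i y z. length xs = n \<longrightarrow> i < n \<longrightarrow>
        f (xs[i := y + z]) = addT (f (xs[i := y])) (f (xs[i := z])))
   \<and> (\<forall>xs i c y. length xs = n \<longrightarrow> i < n \<longrightarrow>
        f (xs[i := sc (phi c) y]) = scT c (f (xs[i := y])))"

text \<open>C^r(E) for r >= 2: an element is an R-multilinear map E^(r-1) -> E, represented as a
  function on lists of length r-1 (normalised to be 0 on lists of other length),
  admitting sigma_C : E^(r-2) -> Der(A), R-multilinear, with properties (1) and (2).
  Positions are 0-based: the paper's i (1 <= i <= r-2) is our i+1.\<close>
definition Cmod ::
  "('r::comm_ring_1 \<Rightarrow> 'a::comm_ring_1) \<Rightarrow> ('a \<Rightarrow> 'e::ab_group_add \<Rightarrow> 'e) \<Rightarrow> ('e \<Rightarrow> 'e \<Rightarrow> 'a) \<Rightarrow>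
   nat \<Rightarrow> ('e list \<Rightarrow> 'e) set" where
  "Cmod phi sc B r = {C.
     (\<forall>xs. length xs \<noteq> r - 1 \<longrightarrow> C xs = 0)
   \<and> multilinear_R phi sc (r - 1) (+) (\<lambda>c v. sc (phi c) v) C
   \<and> (\<exists>\<sigma> :: 'e list \<Rightarrow> 'a \<Rightarrow> 'a.
        (\<forall>xs. length xs = r - 2 \<longrightarrow> is_derivation phi (\<sigma> xs))
      \<and> multilinear_R phi sc (r - 2) (\<lambda>D1 D2 a. D1 a + D2 a) (\<lambda>c D a. phi c * D a) \<sigma>
      \<and> (\<forall>xs u w. length xs = r - 2 \<longrightarrow>
           \<sigma> xs (B u w) = B (C (xs @ [u])) w + B u (C (xs @ [w])))
      \<and> (3 \<le> r \<longrightarrow> (\<forall>xs u i. length xs = r - 1 \<longrightarrow> i < r - 2 \<longrightarrow>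
           B (C xs + C (xs[i := xs ! Suc i, Suc i := xs ! i])) u
             = \<sigma> (take i xs @ drop (Suc (Suc i)) xs @ [u]) (B (xs ! i) (xs ! Suc i)))))}"

text \<open>A homogeneous element of degree r is encoded by its full contraction, an A-valued
  function of r arguments (lists of length r, 0 elsewhere): a in A by the constant a,
  y in E by w |-> <y,w>, and C in C^r (r >= 2) by (x_1..x_{r-1},w) |-> <C(x_1..x_{r-1}),w>.
  By strong nondegeneracy this encoding is injective, and i_x corresponds to
  fixing the first argument to x.\<close>
definition encA :: "'a::comm_ring_1 \<Rightarrow> 'e list \<Rightarrow> 'a" where
  "encA a = (\<lambda>xs. if xs = [] then a else 0)"

definition encE :: "('e \<Rightarrow> 'e \<Rightarrow> 'a::comm_ring_1) \<Rightarrow> 'e \<Rightarrow> 'e list \<Rightarrow> 'a" where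
  "encE B y = (\<lambda>xs. if length xs = 1 then B y (hd xs) else 0)"

definition encC :: "('e \<Rightarrow> 'e \<Rightarrow> 'a::comm_ring_1) \<Rightarrow> nat \<Rightarrow> ('e list \<Rightarrow> 'e) \<Rightarrow> 'e list \<Rightarrow> 'a" where
  "encC B r C = (\<lambda>xs. if length xs = r then B (C (butlast xs)) (last xs) else 0)"

text \<open>The wedge product of homogeneous elements of degrees r and s (in encoded form),
  defined by the recursion i_x(C1 ^ C2) = (-1)^s (i_x C1) ^ C2 + C1 ^ (i_x C2),
  i_x of a degree-0 element being 0, with a ^ b = ab in degree 0.\<close>
fun wedge :: "nat \<Rightarrow> nat \<Rightarrow> ('e list \<Rightarrow> 'a::comm_ring_1) \<Rightarrow> ('e list \<Rightarrow> 'a) \<Rightarrow> 'e list \<Rightarrow> 'a" where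
  "wedge r s f g [] = (if r = 0 \<and> s = 0 then f [] * g [] else 0)"
| "wedge r s f g (x # xs) =
     (if 0 < r then (-1) ^ s * wedge (r - 1) s (\<lambda>ys. f (x # ys)) g xs else 0)
   + (if 0 < s then wedge r (s - 1) f (\<lambda>ys. g (x # ys)) xs else 0)"

text \<open>Elements of the direct sum: degree |-> homogeneous component.\<close>
type_synonym ('e, 'a) graded = "nat \<Rightarrow> 'e list \<Rightarrow> 'a"

definition gsingle :: "nat \<Rightarrow> ('e list \<Rightarrow> 'a::zero) \<Rightarrow> ('e, 'a) graded" where
  "gsingle r F = (\<lambda>n. if n = r then F else (\<lambda>_. 0))"

definition gadd :: "('e, 'a::plus) graded \<Rightarrow> ('e, 'a) graded \<Rightarrow> ('e, 'a) graded" where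
  "gadd u v = (\<lambda>n xs. u n xs + v n xs)"

definition gscale :: "('r \<Rightarrow> 'a::times) \<Rightarrow> 'r \<Rightarrow> ('e, 'a) graded \<Rightarrow> ('e, 'a) graded" where
  "gscale phi c u = (\<lambda>n xs. phi c * u n xs)"

definition gwedge :: "('e, 'a::comm_ring_1) graded \<Rightarrow> ('e, 'a) graded \<Rightarrow> ('e, 'a) graded" where
  "gwedge u v = (\<lambda>n xs. \<Sum>r\<le>n. wedge r (n - r) (u r) (v (n - r)) xs)"

inductive_set gen_subalg ::
  "('r::comm_ring_1 \<Rightarrow> 'a::comm_ring_1) \<Rightarrow> ('a \<Rightarrow> 'e::ab_group_add \<Rightarrow> 'e) \<Rightarrow> ('e \<Rightarrow> 'e \<Rightarrow> 'a) \<Rightarrow>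
   ('e, 'a) graded set"
  for phi sc B where
  genA: "gsingle 0 (encA a) \<in> gen_subalg phi sc B"
| genE: "gsingle 1 (encE B y) \<in> gen_subalg phi sc B"
| genC2: "C \<in> Cmod phi sc B 2 \<Longrightarrow> gsingle 2 (encC B 2 C) \<in> gen_subalg phi sc B"
| gen0: "(\<lambda>n xs. 0) \<in> gen_subalg phi sc B"
| genAdd: "u \<in> gen_subalg phi sc B \<Longrightarrow> v \<in> gen_subalg phi sc B \<Longrightarrow> gadd u v \<in> gen_subalg phi sc B"
| genScale: "u \<in> gen_subalg phi sc B \<Longrightarrow> gscale phi c u \<in> gen_subalg phi sc B"
| genWedge: "u \<in> gen_subalg phi sc B \<Longrightarrow> v \<in> gen_subalg phi sc B \<Longrightarrow> gwedge u v \<in> gen_subalg phi sc B"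

definition Chat3 ::
  "('r::comm_ring_1 \<Rightarrow> 'a::comm_ring_1) \<Rightarrow> ('a \<Rightarrow> 'e::ab_group_add \<Rightarrow> 'e) \<Rightarrow> ('e \<Rightarrow> 'e \<Rightarrow> 'a) \<Rightarrow>
   ('e list \<Rightarrow> 'e) set" where
  "Chat3 phi sc B = {C \<in> Cmod phi sc B 3. gsingle 3 (encC B 3 C) \<in> gen_subalg phi sc B}"

end

theory Submission
  imports Defs
begin

text \<open>Write c(x,y,u) = \<langle>C(x,y),u\<rangle> for C in C^3(E) and \<sigma> x for its derivations.
  Property (2) says \<sigma> u \<langle>x,y\<rangle> = c(x,y,u) + c(y,x,u), which is A-linear in u; as the form
  is full, \<sigma> u is A-linear in u.  A finitely generated projective module with a strongly
  nondegenerate form has a dual frame z = \<Sum>k. \<langle>f k,z\<rangle> e k.  Averaging \<sigma> over it gives a form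
  T(z,p,q), A-linear in z, with T(z,p,q) + T(z,q,p) = \<sigma> z \<langle>p,q\<rangle>.  The difference h between c
  and the Koszul combination of T is totally skew, and \<Phi> = T + h/3 still satisfies
  \<Phi>(z,p,q) + \<Phi>(z,q,p) = \<sigma> z \<langle>p,q\<rangle>, while c(x,y,u) = \<Phi>(x,y,u) - \<Phi>(y,x,u) + \<Phi>(u,x,y).
  Hence D k, defined by \<langle>D k p, q\<rangle> = \<Phi>(e k,p,q), lies in C^2(E) with derivation \<sigma> (e k), and
  expanding \<Phi> in its first argument over the frame turns that identity into C = \<Sum>k. f k \<and> D k.\<close>

lemma wedge_zero_left: "wedge r s (\<lambda>_. 0) g xs = 0"
  by (induction xs arbitrary: r s g) auto

lemma wedge_zero_right: "wedge r s f (\<lambda>_. 0) xs = 0"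
  by (induction xs arbitrary: r s f) auto

lemma wedge_eq_0_if_length_neq: "length xs \<noteq> r + s \<Longrightarrow> wedge r s f g xs = 0"
proof (induction xs arbitrary: r s f g)
  case Nil
  then show ?case by auto
next
  case (Cons x xs)
  have "0 < r \<Longrightarrow> wedge (r - 1) s (\<lambda>ys. f (x # ys)) g xs = 0"
    and "0 < s \<Longrightarrow> wedge r (s - 1) f (\<lambda>ys. g (x # ys)) xs = 0"
    using Cons by (auto intro!: Cons.IH)
  then show ?case by (simp only: wedge.simps) auto
qed

lemma gwedge_gsingle: "gwedge (gsingle r F) (gsingle s G) = gsingle (r + s) (wedge r s F G)"
proof (intro ext)
  fix m xs
  have "gwedge (gsingle r F) (gsingle s G) m xs =
        (\<Sum>k\<le>m. if k = r then (if m - r = s then wedge r s F G xs else 0) else 0)"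
    unfolding gwedge_def gsingle_def
    by (intro sum.cong refl) (auto simp: wedge_zero_left wedge_zero_right)
  also have "\<dots> = gsingle (r + s) (wedge r s F G) m xs"
    by (auto simp: gsingle_def)
  finally show "gwedge (gsingle r F) (gsingle s G) m xs = gsingle (r + s) (wedge r s F G) m xs" .
qed

lemma wedge_encE_encC2:
  "wedge 1 2 (encE B y) (encC B 2 D) [x1, x2, u] =
     B y x1 * B (D [x2]) u - B y x2 * B (D [x1]) u + B (D [x1]) x2 * B y u"
  by (simp add: encE_def encC_def numeral_2_eq_2 algebra_simps)

lemma gen_subalg_sum:
  "(\<And>i. i < (m::nat) \<Longrightarrow> u i \<in> gen_subalg phi sc B) \<Longrightarrow>
    (\<lambda>d xs. \<Sum>i<m. u i d xs) \<in> gen_subalg phi sc B"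
proof (induction m)
  case 0
  then show ?case using gen0 by simp
next
  case (Suc m)
  have "(\<lambda>d xs. \<Sum>i<Suc m. u i d xs) = gadd (\<lambda>d xs. \<Sum>i<m. u i d xs) (u m)"
    by (simp add: gadd_def)
  then show ?case using Suc by (auto intro!: genAdd)
qed

lemma unital_ring_hom_of_nat: "unital_ring_hom phi \<Longrightarrow> phi (of_nat m) = of_nat m"
proof (induction m)
  case 0
  have "phi (0 + 0) = phi 0 + phi 0" using 0 unfolding unital_ring_hom_def by blast
  then show ?case by simp
next
  case (Suc m)
  then show ?case unfolding unital_ring_hom_def by simp
qed

lemma of_nat_invertible:
  fixes phi :: "'r::comm_ring_1 \<Rightarrow> 'a::comm_ring_1"
  assumes "contains_rationals TYPE('r)" and "unital_ring_hom phi" and "0 < m"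
  obtains t :: 'a where "of_nat m * t = 1"
proof -
  obtain c :: 'r where "of_nat m * c = 1" using assms(1,3) unfolding contains_rationals_def by blast
  then have "phi (of_nat m) * phi c = 1" using assms(2) unfolding unital_ring_hom_def by metis
  then show thesis using that unital_ring_hom_of_nat[OF assms(2)] by simp
qed

lemma module_mult: "module ((*) :: 'a::comm_ring_1 \<Rightarrow> 'a \<Rightarrow> 'a)"
  by unfold_locales (simp_all add: algebra_simps)

definition lift1 :: "('e \<Rightarrow> 'e::zero) \<Rightarrow> 'e list \<Rightarrow> 'e" where
  "lift1 D xs = (if length xs = 1 then D (hd xs) else 0)"

lemma lift1_in_Cmod_2:
  assumes "\<And>x y. D (x + y) = D x + D y" and "\<And>r x. D (sc (phi r) x) = sc (phi r) (D x)"
    and "is_derivation phi \<delta>" and "\<And>u w. \<delta> (B u w) = B (D u) w + B u (D w)"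
  shows "lift1 D \<in> Cmod phi sc B 2"
proof -
  have "multilinear_R phi sc 1 (+) (\<lambda>c v. sc (phi c) v) (lift1 D)"
    unfolding multilinear_R_def
    by (auto simp: lift1_def assms(1,2) length_Suc_conv)
  then show ?thesis
    unfolding Cmod_def using assms(3,4)
    by (auto simp: lift1_def multilinear_R_def intro!: exI[of _ "\<lambda>_. \<delta>"])
qed

locale C3_element =
  fixes phi :: "'r::comm_ring_1 \<Rightarrow> 'a::comm_ring_1" and sc :: "'a \<Rightarrow> 'e::ab_group_add \<Rightarrow> 'e"
    and B :: "'e \<Rightarrow> 'e \<Rightarrow> 'a" and C :: "'e list \<Rightarrow> 'e" and \<sigma> :: "'e \<Rightarrow> 'a \<Rightarrow> 'a"
  assumes sigma_derivation: "is_derivation phi (\<sigma> x)"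
    and C_add_left: "C [x + y, z] = C [x, z] + C [y, z]"
    and C_add_right: "C [z, x + y] = C [z, x] + C [z, y]"
    and C_scale_right: "C [z, sc (phi r) x] = sc (phi r) (C [z, x])"
    and sigma_compatible: "\<sigma> x (B u w) = B (C [x, u]) w + B u (C [x, w])"
    and C_symmetric_part: "B (C [x, y] + C [y, x]) u = \<sigma> u (B x y)"
begin

lemma sigma_derivation_rules:
  shows sigma_add: "\<sigma> x (a + b) = \<sigma> x a + \<sigma> x b"
    and sigma_mult: "\<sigma> x (a * b) = a * \<sigma> x b + b * \<sigma> x a"
    and sigma_phi: "\<sigma> x (phi r * a) = phi r * \<sigma> x a"
  using sigma_derivation unfolding is_derivation_def by blast+

lemma sigma_sum: "\<sigma> x (sum g K) = (\<Sum>k\<in>K. \<sigma> x (g k))"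
proof -
  interpret additive "\<sigma> x" by unfold_locales (rule sigma_add)
  show ?thesis by (rule sum)
qed

end

lemma Cmod_3_C3_element:
  assumes "C \<in> Cmod phi sc B 3"
  obtains \<sigma> where "C3_element phi sc B C \<sigma>"
proof -
  obtain \<sigma> where ml: "multilinear_R phi sc 2 (+) (\<lambda>c v. sc (phi c) v) C"
    and der: "\<forall>xs. length xs = 1 \<longrightarrow> is_derivation phi (\<sigma> xs)"
    and compat: "\<forall>xs u w. length xs = 1 \<longrightarrow>
           \<sigma> xs (B u w) = B (C (xs @ [u])) w + B u (C (xs @ [w]))"
    and sym: "\<forall>xs u i. length xs = 2 \<longrightarrow> i < 1 \<longrightarrow>
           B (C xs + C (xs[i := xs ! Suc i, Suc i := xs ! i])) u
             = \<sigma> (take i xs @ drop (Suc (Suc i)) xs @ [u]) (B (xs ! i) (xs ! Suc i))"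
    using assms unfolding Cmod_def by auto
  note C_add = conjunct1[OF ml[unfolded multilinear_R_def], rule_format]
  note C_scale = conjunct2[OF ml[unfolded multilinear_R_def], rule_format]
  have "C3_element phi sc B C (\<lambda>x. \<sigma> [x])"
  proof
    show "C [x + y, z] = C [x, z] + C [y, z]" for x y z
      using C_add[of "[x, z]" 0 x y] by simp
    show "C [z, x + y] = C [z, x] + C [z, y]" for x y z
      using C_add[of "[z, x]" 1 x y] by simp
    show "C [z, sc (phi r) x] = sc (phi r) (C [z, x])" for r x z
      using C_scale[of "[z, x]" 1 r x] by simp
    show "B (C [x, y] + C [y, x]) u = \<sigma> [u] (B x y)" for x y u
      using sym[rule_format, of "[x, y]" 0 u] by simp
  qed (use der compat in auto)
  then show thesis by (rule that)
qed

lemma strongly_nondegenerate_represents: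
  assumes "strongly_nondegenerate sc B" and "module_hom sc (*) g"
  obtains v where "B v = g"
  using assms unfolding strongly_nondegenerate_def bij_betw_def by (metis mem_Collect_eq rangeE)

locale dual_frame = module sc
  for sc :: "'a::comm_ring_1 \<Rightarrow> 'e::ab_group_add \<Rightarrow> 'e" +
  fixes B :: "'e \<Rightarrow> 'e \<Rightarrow> 'a" and n :: nat and e f :: "nat \<Rightarrow> 'e"
  assumes bilinear: "bilinear_form sc B" and symmetric: "symmetric_form B"
    and nondegenerate: "strongly_nondegenerate sc B"
    and frame_expansion: "\<And>z. z = (\<Sum>k<n. sc (B (f k) z) (e k))"
begin

lemma B_linear:
  shows B_add_left: "B (x + y) z = B x z + B y z" and B_scale_left: "B (sc a x) z = a * B x z"
    and B_add_right: "B z (x + y) = B z x + B z y" and B_scale_right: "B z (sc a x) = a * B z x"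
  using bilinear unfolding bilinear_form_def by blast+

lemma B_commute: "B x y = B y x"
  using symmetric unfolding symmetric_form_def by blast

lemma B_inject: "B x = B y \<Longrightarrow> x = y"
  using nondegenerate unfolding strongly_nondegenerate_def bij_betw_def inj_def by blast

lemma B_represents:
  assumes "\<And>x y. g (x + y) = g x + g y" and "\<And>a x. g (sc a x) = a * g x"
  obtains v where "B v = g"
proof -
  have "module_hom sc (*) g"
    using assms module_axioms module_mult by (simp add: module_hom_iff)
  then show thesis using strongly_nondegenerate_represents[OF nondegenerate] that by blast
qed

lemma linear_functional_expansion:
  assumes "\<And>x y. g (x + y) = g x + g y" and "\<And>a x. g (sc a x) = a * g x"
  shows "g z = (\<Sum>k<n. B (f k) z * g (e k))"
proof -
  interpret additive g by unfold_locales (rule assms(1))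
  have "g z = g (\<Sum>k<n. sc (B (f k) z) (e k))" by (subst frame_expansion) rule
  also have "\<dots> = (\<Sum>k<n. B (f k) z * g (e k))" by (simp add: sum assms(2))
  finally show ?thesis .
qed

lemma frame_sum_fe: "(\<Sum>k<n. B (f k) p * B (e k) q) = B p q"
  using linear_functional_expansion[of "\<lambda>z. B z q" p] B_linear by simp

lemma frame_sum_ef: "(\<Sum>k<n. B (e k) p * B (f k) q) = B p q"
  using frame_sum_fe[of q p] by (simp add: B_commute mult.commute)

end

lemma fg_projective_dual_frame:
  fixes B :: "'e::ab_group_add \<Rightarrow> 'e \<Rightarrow> 'a::comm_ring_1"
  assumes "module sc" and "fg_projective sc" and "strongly_nondegenerate sc B"
  obtains n :: nat and e f :: "nat \<Rightarrow> 'e" where "\<And>z. z = (\<Sum>k<n. sc (B (f k) z) (e k))"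
proof -
  interpret module sc by fact
  obtain n :: nat and i p where
    i0: "\<forall>x k. n \<le> k \<longrightarrow> i x k = 0" and
    iadd: "\<forall>x y. i (x + y) = (\<lambda>k. i x k + i y k)" and
    isc: "\<forall>a x. i (sc a x) = (\<lambda>k. a * i x k)" and
    padd: "\<forall>f g. p (\<lambda>k. f k + g k) = p f + p g" and
    psc: "\<forall>a f. p (\<lambda>k. a * f k) = sc a (p f)" and
    pi: "\<forall>x. p (i x) = x"
    using assms(2) unfolding fg_projective_def by blast
  have "\<exists>v. B v = (\<lambda>x. i x k)" for k
  proof -
    have "module_hom sc (*) (\<lambda>x. i x k)"
      using module_axioms module_mult iadd isc by (simp add: module_hom_iff)
    with assms(3) show ?thesis by (metis strongly_nondegenerate_represents)
  qed
  then obtain f where f: "\<And>k. B (f k) = (\<lambda>x. i x k)" by metis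
  define \<delta> where "\<delta> k = (\<lambda>j. if j = k then 1 else 0 :: 'a)" for k :: nat
  have p0: "p (\<lambda>j. 0) = 0" using psc[rule_format, of 0 "\<lambda>j. 0"] by simp
  have p_sum: "p (\<lambda>j. \<Sum>k<m. a k * \<delta> k j) = (\<Sum>k<m. sc (a k) (p (\<delta> k)))" for m a
  proof (induction m)
    case 0
    then show ?case using p0 by simp
  next
    case (Suc m)
    then show ?case using padd psc by simp
  qed
  have frame: "z = (\<Sum>k<n. sc (B (f k) z) (p (\<delta> k)))" for z
  proof -
    have "i z = (\<lambda>j. \<Sum>k<n. i z k * \<delta> k j)"
      using i0 by (force simp: \<delta>_def if_distrib cong: if_cong)
    then have "z = p (\<lambda>j. \<Sum>k<n. i z k * \<delta> k j)" using pi by metis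
    then show ?thesis using p_sum f by simp
  qed
  show thesis by (rule that[OF frame])
qed

locale C3_frame_decomposition = dual_frame sc B n e f + C3_element phi sc B C \<sigma>
  for sc :: "'a::comm_ring_1 \<Rightarrow> 'e::ab_group_add \<Rightarrow> 'e" and B n e f
    and phi :: "'r::comm_ring_1 \<Rightarrow> 'a" and C \<sigma> +
  fixes half third :: 'a
  assumes full: "full_form B" and half: "2 * half = 1" and third: "3 * third = 1"
begin

definition form3 :: "'e \<Rightarrow> 'e \<Rightarrow> 'e \<Rightarrow> 'a" where
  "form3 x y u = B (C [x, y]) u"

lemma form3_linear:
  shows form3_add_left: "form3 (x + y) p q = form3 x p q + form3 y p q"
    and form3_add_middle: "form3 p (x + y) q = form3 p x q + form3 p y q"
    and form3_scale_middle: "form3 p (sc (phi r) x) q = phi r * form3 p x q"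
    and form3_add_right: "form3 p q (x + y) = form3 p q x + form3 p q y"
    and form3_scale_right: "form3 p q (sc a x) = a * form3 p q x"
  by (simp_all add: form3_def C_add_left C_add_right C_scale_right B_linear)

lemma sigma_form3: "\<sigma> x (B u w) = form3 x u w + form3 x w u"
  using sigma_compatible[of x u w] by (simp add: form3_def B_commute[of u "C [x, w]"])

lemma form3_symmetric_part: "form3 x y u + form3 y x u = \<sigma> u (B x y)"
  using C_symmetric_part by (simp add: form3_def B_add_left)

lemma sigma_direction_linear:
  shows sigma_add_direction: "\<sigma> (x + y) a = \<sigma> x a + \<sigma> y a"
    and sigma_scale_direction: "\<sigma> (sc b x) a = b * \<sigma> x a"
proof -
  obtain m :: nat and xs ys where a: "a = (\<Sum>i<m. B (xs i) (ys i))"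
    using full unfolding full_form_def by blast
  show "\<sigma> (x + y) a = \<sigma> x a + \<sigma> y a"
    unfolding a sigma_sum form3_symmetric_part[symmetric]
    by (simp add: form3_linear sum.distrib algebra_simps)
  show "\<sigma> (sc b x) a = b * \<sigma> x a"
    unfolding a sigma_sum form3_symmetric_part[symmetric]
    by (simp add: form3_linear sum_distrib_left algebra_simps)
qed

definition frame_conn :: "'e \<Rightarrow> 'e \<Rightarrow> 'e \<Rightarrow> 'a" where
  "frame_conn z p q =
     half * (\<Sum>k<n. \<sigma> z (B (f k) p) * B (e k) q + \<sigma> z (B (e k) p) * B (f k) q)"

lemma frame_conn_metric: "frame_conn z p q + frame_conn z q p = \<sigma> z (B p q)"
proof -
  have "frame_conn z p q + frame_conn z q p =
      half * (\<Sum>k<n. \<sigma> z (B (f k) p * B (e k) q) + \<sigma> z (B (e k) p * B (f k) q))"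
    unfolding frame_conn_def sigma_mult by (simp add: algebra_simps sum.distrib)
  also have "\<dots> = (2 * half) * \<sigma> z (B p q)"
    by (simp add: sum.distrib sigma_sum[symmetric] frame_sum_fe frame_sum_ef B_commute[of q p]
        algebra_simps)
  finally show ?thesis using half by simp
qed

lemma frame_conn_linear:
  shows "frame_conn (x + y) p q = frame_conn x p q + frame_conn y p q"
    and "frame_conn (sc a x) p q = a * frame_conn x p q"
    and "frame_conn z (x + y) q = frame_conn z x q + frame_conn z y q"
    and "frame_conn z (sc (phi r) x) q = phi r * frame_conn z x q"
    and "frame_conn z p (x + y) = frame_conn z p x + frame_conn z p y"
    and "frame_conn z p (sc a x) = a * frame_conn z p x"
  unfolding frame_conn_def sigma_direction_linear B_linear sigma_add sigma_phi
  by (simp_all add: algebra_simps sum.distrib sum_distrib_left)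

definition koszul :: "'e \<Rightarrow> 'e \<Rightarrow> 'e \<Rightarrow> 'a" where
  "koszul z p q = frame_conn z p q - frame_conn p z q + frame_conn q z p"

definition skew_part :: "'e \<Rightarrow> 'e \<Rightarrow> 'e \<Rightarrow> 'a" where
  "skew_part z p q = form3 z p q - koszul z p q"

lemma skew_part_swap23: "skew_part z p q = - skew_part z q p"
proof -
  have "form3 z p q + form3 z q p = \<sigma> z (B p q)" using sigma_form3[of z p q] by simp
  moreover have "koszul z p q + koszul z q p = \<sigma> z (B p q)"
    using frame_conn_metric[of z p q] unfolding koszul_def by (simp add: algebra_simps)
  ultimately show ?thesis unfolding skew_part_def by (simp add: algebra_simps eq_neg_iff_add_eq_0)
qed

lemma skew_part_swap12: "skew_part z p q = - skew_part p z q"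
proof -
  have "form3 z p q + form3 p z q = \<sigma> q (B z p)" by (rule form3_symmetric_part)
  moreover have "koszul z p q + koszul p z q = \<sigma> q (B z p)"
    using frame_conn_metric[of q z p] unfolding koszul_def by (simp add: algebra_simps)
  ultimately show ?thesis unfolding skew_part_def by (simp add: algebra_simps eq_neg_iff_add_eq_0)
qed

lemma skew_part_rotate: "skew_part p q z = skew_part z p q"
  using skew_part_swap12[of p q z] skew_part_swap23[of q p z] skew_part_swap12[of q z p]
    skew_part_swap23[of z q p]
  by simp

lemma skew_part_linear:
  shows "skew_part (x + y) p q = skew_part x p q + skew_part y p q"
    and "skew_part z (x + y) q = skew_part z x q + skew_part z y q"
    and "skew_part z (sc (phi r) x) q = phi r * skew_part z x q"
    and "skew_part z p (x + y) = skew_part z p x + skew_part z p y"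
    and "skew_part z p (sc a x) = a * skew_part z p x"
  unfolding skew_part_def koszul_def form3_linear frame_conn_linear
  by (simp_all add: algebra_simps)

lemma skew_part_scale_left: "skew_part (sc a z) p q = a * skew_part z p q"
  using skew_part_rotate[of p q "sc a z"] skew_part_linear(5)[of p q a z]
    skew_part_rotate[of p q z]
  by simp

definition conn :: "'e \<Rightarrow> 'e \<Rightarrow> 'e \<Rightarrow> 'a" where
  "conn z p q = frame_conn z p q + third * skew_part z p q"

lemma conn_metric: "conn z p q + conn z q p = \<sigma> z (B p q)"
  using frame_conn_metric[of z p q] skew_part_swap23[of z p q]
  unfolding conn_def by (simp add: algebra_simps)

lemma conn_linear:
  shows "conn z (x + y) q = conn z x q + conn z y q"
    and "conn z (sc (phi r) x) q = phi r * conn z x q"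
    and "conn z p (x + y) = conn z p x + conn z p y"
    and "conn z p (sc a x) = a * conn z p x"
  unfolding conn_def frame_conn_linear skew_part_linear by (simp_all add: algebra_simps)

lemma conn_frame_expansion: "conn z p q = (\<Sum>k<n. B (f k) z * conn (e k) p q)"
proof (rule linear_functional_expansion[of "\<lambda>z. conn z p q"])
  show "conn (x + y) p q = conn x p q + conn y p q" for x y
    unfolding conn_def frame_conn_linear skew_part_linear by (simp add: algebra_simps)
  show "conn (sc a x) p q = a * conn x p q" for a x
    unfolding conn_def frame_conn_linear skew_part_scale_left by (simp add: algebra_simps)
qed

lemma form3_eq_conn: "form3 x y u = conn x y u - conn y x u + conn u x y"
proof -
  have "conn x y u - conn y x u + conn u x y = koszul x y u + (3 * third) * skew_part x y u"
    unfolding conn_def koszul_def skew_part_swap12[of y x u] skew_part_rotate[of x y u, symmetric]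
    by (simp add: algebra_simps)
  then show ?thesis using third unfolding skew_part_def by simp
qed

definition conn_op :: "nat \<Rightarrow> 'e \<Rightarrow> 'e" where
  "conn_op k p = (SOME v. B v = conn (e k) p)"

lemma B_conn_op: "B (conn_op k p) q = conn (e k) p q"
proof -
  obtain v where "B v = conn (e k) p"
    by (rule B_represents[of "conn (e k) p"]) (simp_all add: conn_linear)
  then have "B (conn_op k p) = conn (e k) p" unfolding conn_op_def by (rule someI)
  then show ?thesis by simp
qed

lemma lift1_conn_op_in_Cmod_2: "lift1 (conn_op k) \<in> Cmod phi sc B 2"
proof (rule lift1_in_Cmod_2)
  show "conn_op k (x + y) = conn_op k x + conn_op k y" for x y
    by (rule B_inject) (simp add: fun_eq_iff B_conn_op B_add_left conn_linear)
  show "conn_op k (sc (phi r) x) = sc (phi r) (conn_op k x)" for r x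
    by (rule B_inject) (simp add: fun_eq_iff B_conn_op B_scale_left conn_linear)
  show "is_derivation phi (\<sigma> (e k))" by (rule sigma_derivation)
  show "\<sigma> (e k) (B u w) = B (conn_op k u) w + B u (conn_op k w)" for u w
    using conn_metric[of "e k" u w] by (simp add: B_conn_op B_commute[of u])
qed

lemma encC_3_eq_sum_wedge:
  "encC B 3 C = (\<lambda>xs. \<Sum>k<n. wedge 1 2 (encE B (f k)) (encC B 2 (lift1 (conn_op k))) xs)"
proof (intro ext)
  fix xs :: "'e list"
  show "encC B 3 C xs = (\<Sum>k<n. wedge 1 2 (encE B (f k)) (encC B 2 (lift1 (conn_op k))) xs)"
  proof (cases "length xs = 3")
    case False
    then show ?thesis by (simp add: encC_def wedge_eq_0_if_length_neq)
  next
    case True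
    then obtain x y u where xs: "xs = [x, y, u]"
      by (auto simp: numeral_3_eq_3 length_Suc_conv)
    have "(\<Sum>k<n. wedge 1 2 (encE B (f k)) (encC B 2 (lift1 (conn_op k))) xs) =
        (\<Sum>k<n. B (f k) x * conn (e k) y u - B (f k) y * conn (e k) x u
                  + B (f k) u * conn (e k) x y)"
      unfolding xs wedge_encE_encC2 by (simp add: lift1_def B_conn_op algebra_simps)
    also have "\<dots> = conn x y u - conn y x u + conn u x y"
      by (subst (1 2 3) conn_frame_expansion) (simp add: sum.distrib sum_subtractf)
    also have "\<dots> = encC B 3 C xs"
      by (simp add: xs encC_def form3_eq_conn[symmetric] form3_def)
    finally show ?thesis ..
  qed
qed

lemma encC_3_in_gen_subalg: "gsingle 3 (encC B 3 C) \<in> gen_subalg phi sc B"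
proof -
  have "gsingle 3 (encC B 3 C) =
      (\<lambda>d xs. \<Sum>k<n.
         gwedge (gsingle 1 (encE B (f k))) (gsingle 2 (encC B 2 (lift1 (conn_op k)))) d xs)"
    unfolding gwedge_gsingle encC_3_eq_sum_wedge by (simp add: gsingle_def fun_eq_iff)
  also have "\<dots> \<in> gen_subalg phi sc B"
    by (intro gen_subalg_sum genWedge genE genC2 lift1_conn_op_in_Cmod_2)
  finally show ?thesis .
qed

end

theorem mainTheorem5:
  fixes phi :: "'r::comm_ring_1 \<Rightarrow> 'a::comm_ring_1"
    and sc :: "'a \<Rightarrow> 'e::ab_group_add \<Rightarrow> 'e"
    and B :: "'e \<Rightarrow> 'e \<Rightarrow> 'a"
  assumes "contains_rationals TYPE('r)"
    and "unital_ring_hom phi"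
    and "module sc"
    and "fg_projective sc"
    and "bilinear_form sc B"
    and "symmetric_form B"
    and "strongly_nondegenerate sc B"
    and "full_form B"
  shows "Chat3 phi sc B = Cmod phi sc B 3"
proof -
  obtain n :: nat and e f :: "nat \<Rightarrow> 'e" where frame: "\<And>z. z = (\<Sum>k<n. sc (B (f k) z) (e k))"
    using fg_projective_dual_frame[OF assms(3,4,7)] by metis
  obtain half :: 'a where half: "2 * half = 1"
    using of_nat_invertible[OF assms(1,2), of 2] by auto
  obtain third :: 'a where third: "3 * third = 1"
    using of_nat_invertible[OF assms(1,2), of 3] by auto
  have "gsingle 3 (encC B 3 C) \<in> gen_subalg phi sc B" if C: "C \<in> Cmod phi sc B 3" for C
  proof -
    obtain \<sigma> where "C3_element phi sc B C \<sigma>" using Cmod_3_C3_element[OF C] .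
    then interpret C3_frame_decomposition sc B n e f phi C \<sigma> half third
      using assms(3,5-8) frame half third
      by (intro C3_frame_decomposition.intro dual_frame.intro dual_frame_axioms.intro
          C3_frame_decomposition_axioms.intro)
    show ?thesis by (rule encC_3_in_gen_subalg)
  qed
  then show ?thesis unfolding Chat3_def by blast
qed

end
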